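(* Let $B$ be the definite quaternion algebra over $\mathbb{Q}$ of discriminant $p$, $\mathcal{O}$ a maximal order of $B$, and $\mathfrak{P}$ the two-sided prime of $\mathcal{O}$ above $p$, with an identification $\mathcal{O}/\mathfrak{P}\cong\mathbb{F}_{p^2}$. Let $H\in\Lambda^{\mathrm{np}}$ and let $\Gamma\subseteq\operatorname{Aut}(H)$ be a subgroup of order prime to $p$. Then reduction modulo $\mathfrak{P}$ gives injective homomorphisms $\Gamma\hookrightarrow\mathrm{SL}_2(\mathbb{F}_{p^2})$ and $\Gamma/\{\pm1\}\hookrightarrow\mathrm{PGL}_2(\mathbb{F}_{p^2})$.
   Context: Let $x\mapsto\bar x$ be the canonical involution of $B$ and for a matrix $\alpha$ over $B$ let $\alpha^\dagger$ be its conjugate transpose. $\Lambda^{\mathrm{np}}$ is the set of matrices $H = \begin{pmatrix} ps & r\\ \bar r & pt\end{pmatrix}\in M_2(\mathcal{O})$ with $s,t$ positive integers, $r\in\mathfrak{P}$, and $p^2st - r\bar r = p$. For such $H$, $\operatorname{Aut}(H) = \{\alpha\in\mathrm{GL}_2(\mathcal{O}) : \alpha^\dagger H\alpha = H\}$ (a finite group). *)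

theory Defs
  imports "HOL-Analysis.Analysis"
begin

text \<open>Elements x0 + x1 i + x2 j + x3 k with i^2 = a, j^2 = b, k = ij = -ji.
  Every quaternion algebra over Q is isomorphic to one of these.\<close>

datatype quat = Quat (q0: rat) (q1: rat) (q2: rat) (q3: rat)

definition qzero :: quat where "qzero = Quat 0 0 0 0"
definition qone :: quat where "qone = Quat 1 0 0 0"
definition qof_rat :: "rat \<Rightarrow> quat" where "qof_rat c = Quat c 0 0 0"
definition qof_int :: "int \<Rightarrow> quat" where "qof_int n = qof_rat (of_int n)"
definition qadd :: "quat \<Rightarrow> quat \<Rightarrow> quat" where
  "qadd x y = Quat (q0 x + q0 y) (q1 x + q1 y) (q2 x + q2 y) (q3 x + q3 y)"
definition qneg :: "quat \<Rightarrow> quat" where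
  "qneg x = Quat (- q0 x) (- q1 x) (- q2 x) (- q3 x)"
definition qscale :: "rat \<Rightarrow> quat \<Rightarrow> quat" where
  "qscale c x = Quat (c * q0 x) (c * q1 x) (c * q2 x) (c * q3 x)"

definition qmul :: "rat \<Rightarrow> rat \<Rightarrow> quat \<Rightarrow> quat \<Rightarrow> quat" where
  "qmul a b x y = Quat
     (q0 x * q0 y + a * q1 x * q1 y + b * q2 x * q2 y - a * b * q3 x * q3 y)
     (q0 x * q1 y + q1 x * q0 y - b * q2 x * q3 y + b * q3 x * q2 y)
     (q0 x * q2 y + q2 x * q0 y + a * q1 x * q3 y - a * q3 x * q1 y)
     (q0 x * q3 y + q3 x * q0 y + q1 x * q2 y - q2 x * q1 y)"

definition qconj :: "quat \<Rightarrow> quat" where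
  "qconj x = Quat (q0 x) (- q1 x) (- q2 x) (- q3 x)"
definition qnrd :: "rat \<Rightarrow> rat \<Rightarrow> quat \<Rightarrow> rat" where
  "qnrd a b x = q0 x ^ 2 - a * q1 x ^ 2 - b * q2 x ^ 2 + a * b * q3 x ^ 2"
definition qtrd :: "quat \<Rightarrow> rat" where
  "qtrd x = 2 * q0 x"

text \<open>Definite: the reduced norm is positive definite (B \<otimes> R is the Hamilton quaternions).\<close>
definition definite_quat :: "rat \<Rightarrow> rat \<Rightarrow> bool" where
  "definite_quat a b \<longleftrightarrow> (\<forall>x. x \<noteq> qzero \<longrightarrow> qnrd a b x > 0)"

definition lin_comb :: "(nat \<Rightarrow> rat) \<Rightarrow> (nat \<Rightarrow> quat) \<Rightarrow> quat" where
  "lin_comb c e = Quat (\<Sum>k<4. c k * q0 (e k)) (\<Sum>k<4. c k * q1 (e k))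
                       (\<Sum>k<4. c k * q2 (e k)) (\<Sum>k<4. c k * q3 (e k))"

definition q_indep :: "(nat \<Rightarrow> quat) \<Rightarrow> bool" where
  "q_indep e \<longleftrightarrow> (\<forall>c. lin_comb c e = qzero \<longrightarrow> (\<forall>k<4. c k = 0))"

definition zspan :: "(nat \<Rightarrow> quat) \<Rightarrow> quat set" where
  "zspan e = {lin_comb (\<lambda>k. of_int (n k)) e | n :: nat \<Rightarrow> int. True}"

definition lattice_basis :: "quat set \<Rightarrow> (nat \<Rightarrow> quat) \<Rightarrow> bool" where
  "lattice_basis \<O> e \<longleftrightarrow> q_indep e \<and> \<O> = zspan e"

definition is_order :: "rat \<Rightarrow> rat \<Rightarrow> quat set \<Rightarrow> bool" where
  "is_order a b \<O> \<longleftrightarrow> (\<exists>e. lattice_basis \<O> e) \<and> qone \<in> \<O> \<and>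
     (\<forall>x\<in>\<O>. \<forall>y\<in>\<O>. qmul a b x y \<in> \<O>)"

definition maximal_order :: "rat \<Rightarrow> rat \<Rightarrow> quat set \<Rightarrow> bool" where
  "maximal_order a b \<O> \<longleftrightarrow> is_order a b \<O> \<and>
     (\<forall>\<O>'. is_order a b \<O>' \<and> \<O> \<subseteq> \<O>' \<longrightarrow> \<O>' = \<O>)"

definition basis_disc :: "rat \<Rightarrow> rat \<Rightarrow> (nat \<Rightarrow> quat) \<Rightarrow> rat" where
  "basis_disc a b e = (\<Sum>\<sigma> \<in> {\<sigma>. \<sigma> permutes {0..<4::nat}}.
      of_int (sign \<sigma>) * (\<Prod>i<4. qtrd (qmul a b (e i) (e (\<sigma> i)))))"

text \<open>B has discriminant D iff (any, equivalently some) maximal order has reduced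
  discriminant D, i.e. |det (trd (e_i e_j))| = D^2 for a Z-basis e.\<close>
definition quat_disc_is :: "rat \<Rightarrow> rat \<Rightarrow> nat \<Rightarrow> bool" where
  "quat_disc_is a b D \<longleftrightarrow> (\<exists>\<O> e. maximal_order a b \<O> \<and> lattice_basis \<O> e \<and>
      \<bar>basis_disc a b e\<bar> = of_nat (D ^ 2))"

definition two_sided_ideal :: "rat \<Rightarrow> rat \<Rightarrow> quat set \<Rightarrow> quat set \<Rightarrow> bool" where
  "two_sided_ideal a b \<O> P \<longleftrightarrow> P \<subseteq> \<O> \<and> qzero \<in> P \<and>
     (\<forall>x\<in>P. \<forall>y\<in>P. qadd x y \<in> P) \<and> (\<forall>x\<in>P. qneg x \<in> P) \<and>
     (\<forall>x\<in>\<O>. \<forall>y\<in>P. qmul a b x y \<in> P \<and> qmul a b y x \<in> P)"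

definition two_sided_prime_above :: "rat \<Rightarrow> rat \<Rightarrow> quat set \<Rightarrow> nat \<Rightarrow> quat set \<Rightarrow> bool" where
  "two_sided_prime_above a b \<O> p P \<longleftrightarrow> two_sided_ideal a b \<O> P \<and> P \<noteq> \<O> \<and>
     (\<forall>x\<in>\<O>. \<forall>y\<in>\<O>. (\<forall>z\<in>\<O>. qmul a b (qmul a b x z) y \<in> P) \<longrightarrow> x \<in> P \<or> y \<in> P) \<and>
     qof_int (int p) \<in> P"

datatype qmat = QMat (m11: quat) (m12: quat) (m21: quat) (m22: quat)

definition qmat_one :: qmat where "qmat_one = QMat qone qzero qzero qone"
definition qmat_neg :: "qmat \<Rightarrow> qmat" where
  "qmat_neg A = QMat (qneg (m11 A)) (qneg (m12 A)) (qneg (m21 A)) (qneg (m22 A))"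
definition qmat_mul :: "rat \<Rightarrow> rat \<Rightarrow> qmat \<Rightarrow> qmat \<Rightarrow> qmat" where
  "qmat_mul a b A C = QMat
     (qadd (qmul a b (m11 A) (m11 C)) (qmul a b (m12 A) (m21 C)))
     (qadd (qmul a b (m11 A) (m12 C)) (qmul a b (m12 A) (m22 C)))
     (qadd (qmul a b (m21 A) (m11 C)) (qmul a b (m22 A) (m21 C)))
     (qadd (qmul a b (m21 A) (m12 C)) (qmul a b (m22 A) (m22 C)))"
definition qmat_dagger :: "qmat \<Rightarrow> qmat" where
  "qmat_dagger A = QMat (qconj (m11 A)) (qconj (m21 A)) (qconj (m12 A)) (qconj (m22 A))"

definition in_M2 :: "quat set \<Rightarrow> qmat \<Rightarrow> bool" where
  "in_M2 \<O> A \<longleftrightarrow> m11 A \<in> \<O> \<and> m12 A \<in> \<O> \<and> m21 A \<in> \<O> \<and> m22 A \<in> \<O>"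

definition GL2 :: "rat \<Rightarrow> rat \<Rightarrow> quat set \<Rightarrow> qmat set" where
  "GL2 a b \<O> = {A. in_M2 \<O> A \<and> (\<exists>C. in_M2 \<O> C \<and> qmat_mul a b A C = qmat_one \<and>
                                      qmat_mul a b C A = qmat_one)}"

definition Aut :: "rat \<Rightarrow> rat \<Rightarrow> quat set \<Rightarrow> qmat \<Rightarrow> qmat set" where
  "Aut a b \<O> H = {\<alpha> \<in> GL2 a b \<O>. qmat_mul a b (qmat_mul a b (qmat_dagger \<alpha>) H) \<alpha> = H}"

definition Lambda_np :: "rat \<Rightarrow> rat \<Rightarrow> nat \<Rightarrow> quat set \<Rightarrow> qmat set" where
  "Lambda_np a b p P = {QMat (qof_int (int p * s)) r (qconj r) (qof_int (int p * t)) | s t r.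
      s > 0 \<and> t > 0 \<and> r \<in> P \<and>
      qmul a b r (qconj r) = qof_int (int p ^ 2 * s * t - int p)}"

definition qmat_subgroup :: "rat \<Rightarrow> rat \<Rightarrow> qmat set \<Rightarrow> qmat set \<Rightarrow> bool" where
  "qmat_subgroup a b \<Gamma> G \<longleftrightarrow> \<Gamma> \<subseteq> G \<and> qmat_one \<in> \<Gamma> \<and>
     (\<forall>x\<in>\<Gamma>. \<forall>y\<in>\<Gamma>. qmat_mul a b x y \<in> \<Gamma>) \<and>
     (\<forall>x\<in>\<Gamma>. \<exists>y\<in>\<Gamma>. qmat_mul a b x y = qmat_one \<and> qmat_mul a b y x = qmat_one)"

text \<open>red : \<O> \<rightarrow> F is a surjective ring homomorphism with kernel P, i.e. an
  identification \<O>/P \<cong> F.\<close>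
definition reduction_map :: "rat \<Rightarrow> rat \<Rightarrow> quat set \<Rightarrow> quat set \<Rightarrow> (quat \<Rightarrow> 'f::field) \<Rightarrow> bool" where
  "reduction_map a b \<O> P red \<longleftrightarrow>
     red qone = 1 \<and>
     (\<forall>x\<in>\<O>. \<forall>y\<in>\<O>. red (qadd x y) = red x + red y) \<and>
     (\<forall>x\<in>\<O>. \<forall>y\<in>\<O>. red (qmul a b x y) = red x * red y) \<and>
     red ` \<O> = UNIV \<and> P = {x \<in> \<O>. red x = 0}"

definition qm_entry :: "qmat \<Rightarrow> 2 \<Rightarrow> 2 \<Rightarrow> quat" where
  "qm_entry A i j = (if i = 1 then (if j = 1 then m11 A else m12 A)
                               else (if j = 1 then m21 A else m22 A))"

definition red2 :: "(quat \<Rightarrow> 'f::field) \<Rightarrow> qmat \<Rightarrow> 'f^2^2" where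
  "red2 red A = (\<chi> i j. red (qm_entry A i j))"

end

theory Submission
  imports Defs "HOL-Algebra.Multiplicative_Group"
begin

(* Let r be the off-diagonal entry of H, so that r conj(r) = p M with p not dividing M.
   Because O/P is larger than F_p, the prime P satisfies P P <= p O; hence
   lambda(v) = red(conj(r) v / p) is defined on P, additive, and lambda(v u) = lambda(v) red(u).
   Applying lambda to the (1,2) entry of alpha^dagger H alpha = H gives M det(red alpha) = M,
   so det(red alpha) = 1.  If red(alpha) is a scalar multiple c of red(beta), then
   gamma = beta^-1 alpha reduces to c with c^2 = 1, and D = +-gamma is congruent to 1 modulo P
   and has order prime to p.  Writing D = 1 + E, we have E^2 in p M_2(O), and the expansion
   (1 + E)^N = 1 + N E (mod q) for E^2 = 0 (mod q) shows inductively that E lies in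
   p^k M_2(O) for every k, so E = 0.  Integrality of trd and nrd on O, used throughout, comes
   from the trace trd(y)^2 of the lattice-preserving map v -> y v y. *)

lemma quat_eqI:
  "q0 x = q0 y \<Longrightarrow> q1 x = q1 y \<Longrightarrow> q2 x = q2 y \<Longrightarrow> q3 x = q3 y \<Longrightarrow> x = y"
  by (cases x; cases y) auto

lemmas quat_defs = qzero_def qone_def qof_rat_def qof_int_def qadd_def qneg_def qscale_def
  qmul_def qconj_def qnrd_def qtrd_def

lemma qadd_assoc: "qadd (qadd x y) z = qadd x (qadd y z)"
  and qadd_commute: "qadd x y = qadd y x"
  and qadd_left_commute: "qadd x (qadd y z) = qadd y (qadd x z)"
  and qadd_zero_right: "qadd x qzero = x"
  and qadd_qneg_right: "qadd x (qneg x) = qzero"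
  and qneg_qzero: "qneg qzero = qzero"
  by (simp_all add: quat_defs algebra_simps)

lemma qscale_qscale: "qscale c (qscale d x) = qscale (c * d) x"
  and qscale_qadd: "qscale c (qadd x y) = qadd (qscale c x) (qscale c y)"
  and qscale_qneg: "qscale c (qneg x) = qneg (qscale c x)"
  and qscale_one: "qscale 1 x = x"
  by (simp_all add: quat_defs algebra_simps)

lemma qmul_assoc: "qmul a b (qmul a b x y) z = qmul a b x (qmul a b y z)"
  and qmul_qadd_left: "qmul a b (qadd x y) z = qadd (qmul a b x z) (qmul a b y z)"
  and qmul_qadd_right: "qmul a b z (qadd x y) = qadd (qmul a b z x) (qmul a b z y)"
  and qmul_qneg_right: "qmul a b x (qneg y) = qneg (qmul a b x y)"
  and qmul_qscale_left: "qmul a b (qscale c x) y = qscale c (qmul a b x y)"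
  and qmul_qscale_right: "qmul a b x (qscale c y) = qscale c (qmul a b x y)"
  and qmul_qof_rat_left: "qmul a b (qof_rat c) y = qscale c y"
  and qmul_qof_rat_right: "qmul a b y (qof_rat c) = qscale c y"
  by (rule quat_eqI; simp add: quat_defs algebra_simps)+

lemma qconj_qmul: "qconj (qmul a b x y) = qmul a b (qconj y) (qconj x)"
  and qconj_qconj: "qconj (qconj x) = x"
  and qconj_eq_qtrd_minus: "qconj x = qadd (qof_rat (qtrd x)) (qneg x)"
  and qconj_diff_qconj: "qconj (qadd x (qneg (qconj x))) = qneg (qadd x (qneg (qconj x)))"
  and qmul_qconj_right: "qmul a b x (qconj x) = qof_rat (qnrd a b x)"
  and qmul_qconj_left: "qmul a b (qconj x) x = qof_rat (qnrd a b x)"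
  by (rule quat_eqI; simp add: quat_defs algebra_simps power2_eq_square)+

lemma qmul_diff_qmul_qconj:
  "qadd (qmul a b x y) (qneg (qmul a b y (qconj x))) =
   qadd (qscale (qtrd y) x) (qof_rat (qtrd (qmul a b x y) - qtrd x * qtrd y))"
  by (rule quat_eqI) (simp_all add: quat_defs algebra_simps)

lemma qmul_diff_qconj_expansion:
  "qmul a b (qmul a b y u) (qadd w (qneg (qconj w))) =
   qadd (qadd (qmul a b w (qmul a b y u)) (qneg (qmul a b (qmul a b y u) (qconj w))))
    (qneg (qadd (qmul a b (qadd (qmul a b w y) (qneg (qmul a b y (qconj w)))) u)
                (qmul a b y (qadd (qmul a b (qconj w) u) (qneg (qmul a b u (qconj (qconj w))))))))"
  by (rule quat_eqI) (simp_all add: quat_defs algebra_simps)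

lemma qconj_sandwich:
  "qmul a b (qconj u) (qmul a b X u) =
   qadd (qadd (qscale (qtrd u) (qmul a b X u)) (qneg (qscale (qtrd (qmul a b u X)) u)))
        (qscale (qnrd a b u) (qconj X))"
  by (rule quat_eqI) (simp_all add: quat_defs algebra_simps power2_eq_square)

subsection \<open>Integrality of the reduced trace on an order\<close>

definition qcoord :: "quat \<Rightarrow> 4 \<Rightarrow> rat" where
  "qcoord x i = (if i = 1 then q0 x else if i = 2 then q1 x else if i = 3 then q2 x else q3 x)"

definition std_quat :: "4 \<Rightarrow> quat" where
  "std_quat k = Quat (if k = 1 then 1 else 0) (if k = 2 then 1 else 0)
                     (if k = 3 then 1 else 0) (if k = 4 then 1 else 0)"

text \<open>Basis vectors are indexed by \<open>0..<4\<close> in \<^const>\<open>lin_comb\<close> but matrix indices live in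
  the type \<open>4\<close>, whose elements are \<open>1, 2, 3, 4\<close>.\<close>

definition nat_of_index :: "4 \<Rightarrow> nat" where
  "nat_of_index i = (if i = 1 then 0 else if i = 2 then 1 else if i = 3 then 2 else 3)"

definition index_of_nat :: "nat \<Rightarrow> 4" where
  "index_of_nat k = (if k = 0 then 1 else if k = 1 then 2 else if k = 2 then 3 else 4)"

lemma qcoord_simps [simp]:
  "qcoord x 1 = q0 x" "qcoord x 2 = q1 x" "qcoord x 3 = q2 x" "qcoord x 4 = q3 x"
  by (simp_all add: qcoord_def)

lemma nat_of_index_simps [simp]:
  "nat_of_index 1 = 0" "nat_of_index 2 = 1" "nat_of_index 3 = 2" "nat_of_index 4 = 3"
  by (simp_all add: nat_of_index_def)

lemma nat_of_index_less: "nat_of_index i < 4"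
  by (simp add: nat_of_index_def)

lemma index_of_nat_of_index: "index_of_nat (nat_of_index i) = i"
  using exhaust_4[of i] by (auto simp: index_of_nat_def)

lemma sum_lessThan_4: "(\<Sum>k<4. f k) = f 0 + f 1 + f (2::nat) + f 3"
  by (simp add: eval_nat_numeral)

lemma qcoord_eqI:
  assumes "\<And>i. qcoord x i = qcoord y i"
  shows "x = y"
  using assms[of 1] assms[of 2] assms[of 3] assms[of 4] by (intro quat_eqI) simp_all

definition basis_matrix :: "(nat \<Rightarrow> quat) \<Rightarrow> rat^4^4" where
  "basis_matrix e = (\<chi> i j. qcoord (e (nat_of_index j)) i)"

lemma qcoord_lin_comb:
  "qcoord (lin_comb c e) i = (basis_matrix e *v (\<chi> j. c (nat_of_index j))) $ i"
proof -
  have "\<forall>i. qcoord (lin_comb c e) i = (basis_matrix e *v (\<chi> j. c (nat_of_index j))) $ i"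
    unfolding forall_4 matrix_vector_mult_def basis_matrix_def
    by (simp add: sum_4 lin_comb_def sum_lessThan_4 algebra_simps)
  then show ?thesis ..
qed

lemma basis_matrix_inj:
  assumes "q_indep e" "basis_matrix e *v v = 0"
  shows "v = 0"
proof -
  let ?c = "\<lambda>k. v $ index_of_nat k"
  have v: "(\<chi> j. ?c (nat_of_index j)) = v"
    by (simp add: index_of_nat_of_index)
  have "lin_comb ?c e = qzero"
  proof (rule qcoord_eqI)
    fix i
    show "qcoord (lin_comb ?c e) i = qcoord qzero i"
      unfolding qcoord_lin_comb v assms(2) using exhaust_4[of i] by (auto simp: qzero_def)
  qed
  then have z: "\<forall>k<4. ?c k = 0"
    using assms(1) unfolding q_indep_def by blast
  show ?thesis
  proof (rule iffD2[OF vec_eq_iff], rule allI)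
    fix j :: 4
    show "v $ j = 0 $ j"
      using z nat_of_index_less[of j] index_of_nat_of_index[of j] by auto
  qed
qed

lemma basis_matrix_invertible:
  assumes "q_indep e"
  obtains S' where "S' ** basis_matrix e = mat 1" "basis_matrix e ** S' = mat 1"
proof -
  have "\<exists>S'. S' ** basis_matrix e = mat 1"
    unfolding matrix_left_invertible_ker using basis_matrix_inj[OF assms] by blast
  then obtain S' where "S' ** basis_matrix e = mat 1"
    by blast
  then show ?thesis
    using that matrix_left_right_inverse by blast
qed

definition sandwich_matrix :: "rat \<Rightarrow> rat \<Rightarrow> quat \<Rightarrow> rat^4^4" where
  "sandwich_matrix a b y = (\<chi> i k. qcoord (qmul a b y (qmul a b (std_quat k) y)) i)"

lemma qcoord_sandwich:
  "qcoord (qmul a b y (qmul a b x y)) i = (sandwich_matrix a b y *v (\<chi> k. qcoord x k)) $ i"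
proof -
  have "\<forall>i. qcoord (qmul a b y (qmul a b x y)) i =
      (sandwich_matrix a b y *v (\<chi> k. qcoord x k)) $ i"
    unfolding forall_4 matrix_vector_mult_def sandwich_matrix_def
    by (simp add: sum_4 qmul_def std_quat_def algebra_simps)
  then show ?thesis ..
qed

lemma trace_sandwich_matrix: "trace (sandwich_matrix a b y) = (qtrd y)\<^sup>2"
  unfolding trace_def sandwich_matrix_def
  by (simp add: sum_4 qmul_def std_quat_def qtrd_def algebra_simps power2_eq_square)

lemma trace_eq_if_intertwined:
  fixes A M S S' :: "'a::comm_ring_1^'n^'n"
  assumes "S' ** S = mat 1" "S ** S' = mat 1" "A ** S = S ** M"
  shows "trace A = trace M"
proof -
  have "trace M = trace ((S' ** S) ** M)"
    by (simp add: assms(1))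
  also have "\<dots> = trace (S' ** (A ** S))"
    by (simp only: assms(3) matrix_mul_assoc)
  also have "\<dots> = trace ((A ** S) ** S')"
    by (rule trace_mul_sym)
  also have "\<dots> = trace A"
    by (simp add: assms(2) flip: matrix_mul_assoc)
  finally show ?thesis ..
qed

lemma Ints_if_power2_Ints:
  fixes t :: rat
  assumes "t\<^sup>2 \<in> \<int>"
  shows "t \<in> \<int>"
proof -
  obtain n d where q: "quotient_of t = (n, d)"
    by (cases "quotient_of t")
  have t: "t = of_int n / of_int d" and d: "d > 0" and cop: "coprime n d"
    using quotient_of_div[OF q] quotient_of_denom_pos[OF q] quotient_of_coprime[OF q] .
  obtain k where k: "t\<^sup>2 = of_int k"
    using assms Ints_cases by blast
  have "(of_int n)\<^sup>2 = (of_int k * (of_int d)\<^sup>2 :: rat)"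
    using k d unfolding t by (simp add: field_simps power2_eq_square)
  then have "n\<^sup>2 = k * d\<^sup>2"
    by (metis of_int_eq_iff of_int_mult of_int_power)
  then have "d dvd n\<^sup>2"
    by simp
  moreover have "coprime d (n\<^sup>2)"
    using cop by (simp add: coprime_commute)
  ultimately have "is_unit d"
    by (meson coprime_common_divisor dvd_refl)
  then have "d = 1"
    using d by simp
  then show ?thesis
    using t by simp
qed

lemma lin_comb_indicator: "k < 4 \<Longrightarrow> lin_comb (\<lambda>i. of_int (if i = k then 1 else 0)) e = e k"
  by (rule quat_eqI) (auto simp: lin_comb_def sum_lessThan_4 eval_nat_numeral less_Suc_eq)

lemma lin_comb_mem_zspan: "lin_comb (\<lambda>k. of_int (n k)) e \<in> zspan e"
  unfolding zspan_def by blast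

lemma lattice_basis_mem: "lattice_basis \<O> e \<Longrightarrow> k < 4 \<Longrightarrow> e k \<in> \<O>"
  using lin_comb_mem_zspan[of "\<lambda>i. if i = k then 1 else 0" e]
  by (simp add: lattice_basis_def lin_comb_indicator)

text \<open>The sandwich map \<open>v \<mapsto> y v y\<close> preserves the lattice, so its trace \<open>trd(y)^2\<close> is the
  trace of an integer matrix.\<close>

lemma qtrd_in_Ints:
  assumes basis: "lattice_basis \<O> e"
    and mul_mem: "\<And>x y. x \<in> \<O> \<Longrightarrow> y \<in> \<O> \<Longrightarrow> qmul a b x y \<in> \<O>"
    and y: "y \<in> \<O>"
  shows "qtrd y \<in> \<int>"
proof -
  have indep: "q_indep e" and \<O>: "\<O> = zspan e"
    using basis unfolding lattice_basis_def by auto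
  define S where "S = basis_matrix e"
  define A where "A = sandwich_matrix a b y"
  have "\<forall>j. \<exists>n::nat \<Rightarrow> int.
      qmul a b y (qmul a b (e (nat_of_index j)) y) = lin_comb (\<lambda>k. of_int (n k)) e"
    using mul_mem[OF y mul_mem[OF lattice_basis_mem[OF basis nat_of_index_less] y]]
    unfolding \<O> zspan_def by blast
  from choice[OF this] obtain n where n: "\<And>j. qmul a b y (qmul a b (e (nat_of_index j)) y) =
      lin_comb (\<lambda>k. of_int (n j k)) e"
    by blast
  define M :: "rat^4^4" where "M = (\<chi> k j. of_int (n j (nat_of_index k)))"
  have "(A ** S) $ i $ j = (S ** M) $ i $ j" for i j
  proof -
    have "(A ** S) $ i $ j = (A *v (\<chi> k. qcoord (e (nat_of_index j)) k)) $ i"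
      by (simp add: matrix_matrix_mult_def matrix_vector_mult_def S_def basis_matrix_def)
    also have "\<dots> = qcoord (lin_comb (\<lambda>k. of_int (n j k)) e) i"
      unfolding A_def qcoord_sandwich[symmetric] n ..
    also have "\<dots> = (S ** M) $ i $ j"
      by (simp add: qcoord_lin_comb matrix_matrix_mult_def matrix_vector_mult_def M_def S_def)
    finally show ?thesis .
  qed
  then have "A ** S = S ** M"
    by (simp add: vec_eq_iff)
  moreover obtain S' where "S' ** S = mat 1" "S ** S' = mat 1"
    using basis_matrix_invertible[OF indep] unfolding S_def by blast
  ultimately have "(qtrd y)\<^sup>2 = trace M"
    using trace_eq_if_intertwined[of _ S A M] trace_sandwich_matrix unfolding A_def by simp
  also have "\<dots> \<in> \<int>"
    unfolding trace_def M_def by (simp add: sum_4)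
  finally show ?thesis
    by (rule Ints_if_power2_Ints)
qed

lemma lin_comb_add: "lin_comb (\<lambda>k. c k + d k) e = qadd (lin_comb c e) (lin_comb d e)"
  and lin_comb_scale: "lin_comb (\<lambda>k. s * c k) e = qscale s (lin_comb c e)"
  and lin_comb_uminus: "lin_comb (\<lambda>k. - c k) e = qneg (lin_comb c e)"
  and lin_comb_zero: "lin_comb (\<lambda>k. 0) e = qzero"
  by (rule quat_eqI; simp add: lin_comb_def quat_defs sum_lessThan_4 algebra_simps)+

lemma lin_comb_cong: "(\<And>k. k < 4 \<Longrightarrow> c k = d k) \<Longrightarrow> lin_comb c e = lin_comb d e"
  by (simp add: lin_comb_def sum_lessThan_4)

lemma lin_comb_unique:
  assumes "q_indep e" "lin_comb c e = lin_comb d e" "k < 4"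
  shows "c k = d k"
proof -
  have "lin_comb (\<lambda>k. c k + - d k) e = qzero"
    unfolding lin_comb_add lin_comb_uminus assms(2) by (rule qadd_qneg_right)
  then show ?thesis
    using assms(1,3) unfolding q_indep_def by fastforce
qed

definition qtrd_int :: "quat \<Rightarrow> int" where
  "qtrd_int x = \<lfloor>qtrd x\<rfloor>"

definition qnrd_int :: "rat \<Rightarrow> rat \<Rightarrow> quat \<Rightarrow> int" where
  "qnrd_int a b x = \<lfloor>qnrd a b x\<rfloor>"

lemma Ints_if_double_Ints_and_double_power2_Ints:
  fixes c :: rat
  assumes "2 * c \<in> \<int>" "2 * c\<^sup>2 \<in> \<int>"
  shows "c \<in> \<int>"
proof -
  obtain k where k: "2 * c = of_int k"
    using assms(1) Ints_cases by blast
  obtain m where m: "2 * c\<^sup>2 = of_int m"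
    using assms(2) Ints_cases by blast
  have "(of_int k)\<^sup>2 = (2 * of_int m :: rat)"
    using k m by (metis mult.assoc power2_eq_square mult.commute mult.left_commute)
  then have "k\<^sup>2 = 2 * m"
    by (metis of_int_eq_iff of_int_mult of_int_numeral of_int_power)
  then have "even k"
    by (metis dvd_triv_left even_power zero_less_numeral)
  then obtain j where "k = 2 * j" ..
  then show ?thesis
    using k by simp
qed

locale quat_order =
  fixes a b :: rat and \<O> :: "quat set" and e :: "nat \<Rightarrow> quat"
  assumes basis: "lattice_basis \<O> e"
    and qone_mem: "qone \<in> \<O>"
    and qmul_mem: "x \<in> \<O> \<Longrightarrow> y \<in> \<O> \<Longrightarrow> qmul a b x y \<in> \<O>"
begin

lemma indep: "q_indep e" and eq_zspan: "\<O> = zspan e"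
  using basis unfolding lattice_basis_def by auto

lemma memE:
  assumes "x \<in> \<O>"
  obtains n where "x = lin_comb (\<lambda>k. of_int (n k)) e"
  using assms unfolding eq_zspan zspan_def by blast

lemma lin_comb_mem: "lin_comb (\<lambda>k. of_int (n k)) e \<in> \<O>"
  unfolding eq_zspan by (rule lin_comb_mem_zspan)

lemma qadd_mem:
  assumes "x \<in> \<O>" "y \<in> \<O>"
  shows "qadd x y \<in> \<O>"
proof -
  obtain n m where "x = lin_comb (\<lambda>k. of_int (n k)) e" "y = lin_comb (\<lambda>k. of_int (m k)) e"
    using assms memE by metis
  then have "qadd x y = lin_comb (\<lambda>k. of_int (n k + m k)) e"
    by (simp add: lin_comb_add)
  then show ?thesis
    by (metis lin_comb_mem)
qed

lemma qscale_mem: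
  assumes "x \<in> \<O>"
  shows "qscale (of_int c) x \<in> \<O>"
proof -
  obtain n where "x = lin_comb (\<lambda>k. of_int (n k)) e"
    using assms memE by metis
  then have "qscale (of_int c) x = lin_comb (\<lambda>k. of_int (c * n k)) e"
    by (simp add: lin_comb_scale)
  then show ?thesis
    by (metis lin_comb_mem)
qed

lemma qneg_mem: "x \<in> \<O> \<Longrightarrow> qneg x \<in> \<O>"
  using qscale_mem[of x "-1"] by (simp add: quat_defs)

lemma qzero_mem: "qzero \<in> \<O>"
  using lin_comb_mem[of "\<lambda>k. 0"] by (simp add: lin_comb_zero)

lemma qof_int_mem: "qof_int k \<in> \<O>"
  using qscale_mem[OF qone_mem, of k] by (simp add: quat_defs)

lemma qtrd_eq_qtrd_int: "x \<in> \<O> \<Longrightarrow> qtrd x = of_int (qtrd_int x)"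
  unfolding qtrd_int_def using qtrd_in_Ints[OF basis qmul_mem] by (metis Ints_cases floor_of_int)

lemma qconj_eq: "x \<in> \<O> \<Longrightarrow> qconj x = qadd (qof_int (qtrd_int x)) (qneg x)"
  using qconj_eq_qtrd_minus[of x] qtrd_eq_qtrd_int[of x] by (simp add: qof_int_def)

lemma qconj_mem: "x \<in> \<O> \<Longrightarrow> qconj x \<in> \<O>"
  using qconj_eq qadd_mem qof_int_mem qneg_mem by metis

lemma qnrd_in_Ints:
  assumes "x \<in> \<O>"
  shows "qnrd a b x \<in> \<int>"
proof -
  let ?c = "qnrd a b x"
  have c: "qof_rat ?c \<in> \<O>"
    using qmul_qconj_right[of a b x] qmul_mem[OF assms qconj_mem[OF assms]] by simp
  have "qmul a b (qof_rat ?c) (qof_rat ?c) = qof_rat (?c * ?c)"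
    by (simp add: qmul_qof_rat_left quat_defs)
  then have c2: "qof_rat (?c * ?c) \<in> \<O>"
    using qmul_mem[OF c c] by simp
  have "2 * ?c \<in> \<int>" "2 * ?c\<^sup>2 \<in> \<int>"
    using qtrd_eq_qtrd_int[OF c] qtrd_eq_qtrd_int[OF c2]
    by (simp_all add: qtrd_def qof_rat_def power2_eq_square)
  then show ?thesis
    by (rule Ints_if_double_Ints_and_double_power2_Ints)
qed

lemma qnrd_eq_qnrd_int: "x \<in> \<O> \<Longrightarrow> qnrd a b x = of_int (qnrd_int a b x)"
  unfolding qnrd_int_def using qnrd_in_Ints by (metis Ints_cases floor_of_int)

definition multiples :: "int \<Rightarrow> quat set" where
  "multiples q = qscale (of_int q) ` \<O>"

lemma qscale_mem_multiples: "x \<in> \<O> \<Longrightarrow> qscale (of_int q) x \<in> multiples q"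
  unfolding multiples_def by blast

lemma qadd_mem_multiples: "x \<in> multiples q \<Longrightarrow> y \<in> multiples q \<Longrightarrow> qadd x y \<in> multiples q"
  unfolding multiples_def using qadd_mem by (auto simp: qscale_qadd[symmetric])

lemma qneg_mem_multiples: "x \<in> multiples q \<Longrightarrow> qneg x \<in> multiples q"
  unfolding multiples_def using qneg_mem by (auto simp: qscale_qneg[symmetric])

lemma qmul_mem_multiples_left: "x \<in> \<O> \<Longrightarrow> y \<in> multiples q \<Longrightarrow> qmul a b x y \<in> multiples q"
  unfolding multiples_def using qmul_mem by (auto simp: qmul_qscale_right)

lemma qmul_mem_multiples_right: "x \<in> multiples q \<Longrightarrow> y \<in> \<O> \<Longrightarrow> qmul a b x y \<in> multiples q"
  unfolding multiples_def using qmul_mem by (auto simp: qmul_qscale_left)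

lemma qmul_mem_multiples_mult:
  assumes "x \<in> multiples q" "y \<in> multiples q'"
  shows "qmul a b x y \<in> multiples (q * q')"
proof -
  obtain x' y' where "x' \<in> \<O>" "x = qscale (of_int q) x'" "y' \<in> \<O>" "y = qscale (of_int q') y'"
    using assms unfolding multiples_def by blast
  then show ?thesis
    unfolding multiples_def using qmul_mem
    by (auto simp: qmul_qscale_left qmul_qscale_right qscale_qscale mult.commute intro!: image_eqI)
qed

lemma multiples_antimono:
  assumes "q dvd q'" "x \<in> multiples q'"
  shows "x \<in> multiples q"
proof -
  obtain k where k: "q' = q * k"
    using assms(1) by blast
  obtain z where "z \<in> \<O>" "x = qscale (of_int q') z"
    using assms(2) unfolding multiples_def by blast
  then show ?thesis
    unfolding multiples_def k using qscale_mem
    by (auto simp: qscale_qscale intro!: image_eqI[where x = "qscale (of_int k) z"])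
qed

lemma multiples_1: "multiples 1 = \<O>"
  unfolding multiples_def by (simp add: qscale_one)

lemma mem_multiples_cancel:
  assumes "x \<in> \<O>" "qscale (of_int N) x \<in> multiples q" "coprime N q"
  shows "x \<in> multiples q"
proof -
  obtain y where y: "y \<in> \<O>" "qscale (of_int N) x = qscale (of_int q) y"
    using assms(2) unfolding multiples_def by blast
  obtain n where n: "x = lin_comb (\<lambda>k. of_int (n k)) e"
    using assms(1) memE by metis
  obtain m where m: "y = lin_comb (\<lambda>k. of_int (m k)) e"
    using y(1) memE by metis
  have "lin_comb (\<lambda>k. of_int (N * n k)) e = lin_comb (\<lambda>k. of_int (q * m k)) e"
    using y(2) unfolding n m by (simp add: lin_comb_scale[symmetric])
  then have "N * n k = q * m k" if "k < 4" for k
    using lin_comb_unique[OF indep _ that] by (metis of_int_eq_iff)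
  then have "q dvd n k" if "k < 4" for k
    using that assms(3) by (metis coprime_commute coprime_dvd_mult_right_iff dvd_triv_left)
  then have "x = qscale (of_int q) (lin_comb (\<lambda>k. of_int (n k div q)) e)"
    unfolding n lin_comb_scale[symmetric]
    by (intro lin_comb_cong) (simp flip: of_int_mult)
  then show ?thesis
    unfolding multiples_def by (metis lin_comb_mem image_eqI)
qed

lemma mem_all_multiples_imp_qzero:
  assumes "\<bar>q\<bar> \<ge> 2" "\<And>k. x \<in> multiples (q ^ k)"
  shows "x = qzero"
proof -
  obtain n where n: "x = lin_comb (\<lambda>k. of_int (n k)) e"
    using assms(2)[of 0] memE multiples_1 by auto
  have dvd: "q ^ j dvd n k" if "k < 4" for j k
  proof -
    obtain m where "x = qscale (of_int (q ^ j)) (lin_comb (\<lambda>k. of_int (m k)) e)"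
      using assms(2)[of j] memE unfolding multiples_def by blast
    then have "lin_comb (\<lambda>k. of_int (n k)) e = lin_comb (\<lambda>k. of_int (q ^ j * m k)) e"
      unfolding n by (simp add: lin_comb_scale[symmetric])
    then have "n k = q ^ j * m k"
      using lin_comb_unique[OF indep _ that] by (metis of_int_eq_iff)
    then show ?thesis
      by simp
  qed
  have "n k = 0" if "k < 4" for k
  proof (rule ccontr)
    assume nz: "n k \<noteq> 0"
    let ?j = "nat \<bar>n k\<bar>"
    have "\<bar>q\<bar> ^ ?j \<le> \<bar>n k\<bar>"
      using dvd_imp_le_int[OF nz dvd[OF that]] by (simp add: power_abs)
    moreover have "int ?j < 2 ^ ?j"
      by (rule of_nat_less_two_power)
    moreover have "(2::int) ^ ?j \<le> \<bar>q\<bar> ^ ?j"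
      using assms(1) by (simp add: power_mono)
    ultimately show False
      by simp
  qed
  then show ?thesis
    unfolding n by (simp add: lin_comb_cong[of _ "\<lambda>k. 0"] lin_comb_zero)
qed

end

lemma qmat_eqI: "m11 A = m11 B \<Longrightarrow> m12 A = m12 B \<Longrightarrow> m21 A = m21 B \<Longrightarrow> m22 A = m22 B \<Longrightarrow> A = B"
  by (cases A; cases B) auto

definition qmat_zero :: qmat where
  "qmat_zero = QMat qzero qzero qzero qzero"

definition qmat_add :: "qmat \<Rightarrow> qmat \<Rightarrow> qmat" where
  "qmat_add A B = QMat (qadd (m11 A) (m11 B)) (qadd (m12 A) (m12 B))
                       (qadd (m21 A) (m21 B)) (qadd (m22 A) (m22 B))"

definition qmat_scale :: "rat \<Rightarrow> qmat \<Rightarrow> qmat" where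
  "qmat_scale c A = QMat (qscale c (m11 A)) (qscale c (m12 A)) (qscale c (m21 A)) (qscale c (m22 A))"

primrec qmat_pow :: "rat \<Rightarrow> rat \<Rightarrow> qmat \<Rightarrow> nat \<Rightarrow> qmat" where
  "qmat_pow a b A 0 = qmat_one"
| "qmat_pow a b A (Suc n) = qmat_mul a b (qmat_pow a b A n) A"

lemmas qmat_defs = qmat_zero_def qmat_add_def qmat_scale_def qmat_mul_def qmat_one_def qmat_neg_def

lemma qmat_mul_assoc: "qmat_mul a b (qmat_mul a b A B) C = qmat_mul a b A (qmat_mul a b B C)"
  by (rule qmat_eqI)
    (simp_all add: qmat_mul_def qmul_qadd_left qmul_qadd_right qmul_assoc qadd_assoc qadd_left_commute)

lemma qmat_mul_qmat_add_left:
    "qmat_mul a b (qmat_add A B) C = qmat_add (qmat_mul a b A C) (qmat_mul a b B C)"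
  and qmat_mul_qmat_add_right:
    "qmat_mul a b C (qmat_add A B) = qmat_add (qmat_mul a b C A) (qmat_mul a b C B)"
  by (rule qmat_eqI;
      simp add: qmat_defs qmul_qadd_left qmul_qadd_right qadd_assoc qadd_left_commute qadd_commute)+

lemma qmat_mul_qmat_scale_left: "qmat_mul a b (qmat_scale c A) B = qmat_scale c (qmat_mul a b A B)"
  and qmat_mul_qmat_one_left: "qmat_mul a b qmat_one A = A"
  and qmat_mul_qmat_one_right: "qmat_mul a b A qmat_one = A"
  and qmat_mul_qmat_neg_left: "qmat_mul a b (qmat_neg A) B = qmat_neg (qmat_mul a b A B)"
  and qmat_mul_qmat_neg_right: "qmat_mul a b A (qmat_neg B) = qmat_neg (qmat_mul a b A B)"
  and qmat_neg_qmat_neg: "qmat_neg (qmat_neg A) = A"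
  and qmat_add_qmat_zero: "qmat_add qmat_one qmat_zero = qmat_one"
  and qmat_add_qmat_one_diff: "qmat_add qmat_one (qmat_add A (qmat_neg qmat_one)) = A"
  by (rule qmat_eqI; simp add: qmat_defs; rule quat_eqI; simp add: quat_defs algebra_simps)+

lemma qadd_cancel_left: "qadd (qadd x y) z = x \<Longrightarrow> y = qneg z"
  by (cases x; cases y; cases z) (simp add: quat_defs add_eq_0_iff2 add.assoc)

lemma qmat_add_cancel_left:
  assumes "qmat_add (qmat_add A B) C = A"
  shows "B = qmat_neg C"
  using arg_cong[OF assms, of m11] arg_cong[OF assms, of m12] arg_cong[OF assms, of m21]
    arg_cong[OF assms, of m22]
  by (intro qmat_eqI) (simp_all add: qmat_add_def qmat_neg_def qadd_cancel_left)

lemma qmat_pow_add: "qmat_pow a b A (m + n) = qmat_mul a b (qmat_pow a b A m) (qmat_pow a b A n)"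
  by (induction n) (simp_all add: qmat_mul_qmat_one_right qmat_mul_assoc)

lemma qmat_pow_mult: "qmat_pow a b A (m * n) = qmat_pow a b (qmat_pow a b A m) n"
proof (induction n)
  case (Suc n)
  have "m * Suc n = m * n + m"
    by simp
  then show ?case
    using Suc by (simp only: qmat_pow_add qmat_pow.simps)
qed simp

lemma qmat_pow_qmat_one: "qmat_pow a b qmat_one n = qmat_one"
  by (induction n) (simp_all add: qmat_mul_qmat_one_left)

lemma qmat_pow_qmat_neg_even: "even n \<Longrightarrow> qmat_pow a b (qmat_neg A) n = qmat_pow a b A n"
proof -
  have "qmat_pow a b (qmat_neg A) n =
      (if even n then qmat_pow a b A n else qmat_neg (qmat_pow a b A n))" for n
    by (induction n) (auto simp: qmat_mul_qmat_neg_left qmat_mul_qmat_neg_right qmat_neg_qmat_neg)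
  then show "even n \<Longrightarrow> ?thesis"
    by simp
qed

lemma qmat_pow_one_plus_step:
  assumes "qmat_mul a b E E = qmat_scale q Y"
  shows "qmat_mul a b (qmat_add (qmat_add qmat_one (qmat_scale n E)) (qmat_scale q X)) (qmat_add qmat_one E)
       = qmat_add (qmat_add qmat_one (qmat_scale (n + 1) E))
                  (qmat_scale q (qmat_add (qmat_add (qmat_scale n Y) X) (qmat_mul a b X E)))"
proof -
  have "qmat_mul a b (qmat_add (qmat_add qmat_one (qmat_scale n E)) (qmat_scale q X)) (qmat_add qmat_one E)
      = qmat_add (qmat_add (qmat_add qmat_one (qmat_scale n E)) (qmat_scale q X))
                 (qmat_add (qmat_add E (qmat_scale n (qmat_scale q Y))) (qmat_scale q (qmat_mul a b X E)))"
    unfolding qmat_mul_qmat_add_left qmat_mul_qmat_add_right qmat_mul_qmat_one_left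
      qmat_mul_qmat_one_right qmat_mul_qmat_scale_left assms ..
  also have "\<dots> = qmat_add (qmat_add qmat_one (qmat_scale (n + 1) E))
                  (qmat_scale q (qmat_add (qmat_add (qmat_scale n Y) X) (qmat_mul a b X E)))"
    by (rule qmat_eqI; simp add: qmat_add_def qmat_scale_def; rule quat_eqI;
        simp add: qadd_def qscale_def algebra_simps)
  finally show ?thesis .
qed

context quat_order
begin

lemma in_M2_qmat_add: "in_M2 \<O> A \<Longrightarrow> in_M2 \<O> B \<Longrightarrow> in_M2 \<O> (qmat_add A B)"
  and in_M2_qmat_scale: "in_M2 \<O> A \<Longrightarrow> in_M2 \<O> (qmat_scale (of_int k) A)"
  and in_M2_qmat_neg: "in_M2 \<O> A \<Longrightarrow> in_M2 \<O> (qmat_neg A)"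
  and in_M2_qmat_mul: "in_M2 \<O> A \<Longrightarrow> in_M2 \<O> B \<Longrightarrow> in_M2 \<O> (qmat_mul a b A B)"
  and in_M2_qmat_zero: "in_M2 \<O> qmat_zero"
  by (simp_all add: in_M2_def qmat_defs qadd_mem qscale_mem qneg_mem qmul_mem qzero_mem)

lemma in_M2_multiplesE:
  assumes "in_M2 (multiples q) X"
  obtains Y where "in_M2 \<O> Y" "X = qmat_scale (of_int q) Y"
proof -
  from assms obtain y11 y12 y21 y22 where
    "y11 \<in> \<O>" "m11 X = qscale (of_int q) y11" "y12 \<in> \<O>" "m12 X = qscale (of_int q) y12"
    "y21 \<in> \<O>" "m21 X = qscale (of_int q) y21" "y22 \<in> \<O>" "m22 X = qscale (of_int q) y22"
    unfolding in_M2_def multiples_def by blast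
  then show ?thesis
    using that[of "QMat y11 y12 y21 y22"] by (simp add: in_M2_def qmat_scale_def qmat_eqI)
qed

text \<open>If \<open>E\<^sup>2 \<equiv> 0 (mod q)\<close> then \<open>(1 + E)\<^sup>n \<equiv> 1 + n E (mod q)\<close>, so \<open>(1 + E)\<^sup>N = 1\<close> forces
  \<open>N E \<equiv> 0 (mod q)\<close>.\<close>

lemma one_plus_torsion_lift:
  assumes E: "in_M2 \<O> E" and EE: "in_M2 (multiples q) (qmat_mul a b E E)"
    and pow: "qmat_pow a b (qmat_add qmat_one E) N = qmat_one" and cop: "coprime (int N) q"
  shows "in_M2 (multiples q) E"
proof -
  obtain Y where Y: "in_M2 \<O> Y" "qmat_mul a b E E = qmat_scale (of_int q) Y"
    using in_M2_multiplesE[OF EE] by blast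
  have "\<exists>X. in_M2 \<O> X \<and> qmat_pow a b (qmat_add qmat_one E) n =
      qmat_add (qmat_add qmat_one (qmat_scale (of_nat n) E)) (qmat_scale (of_int q) X)" for n
  proof (induction n)
    case 0
    have "qmat_one = qmat_add (qmat_add qmat_one (qmat_scale 0 E)) (qmat_scale (of_int q) qmat_zero)"
      by (rule qmat_eqI; simp add: qmat_defs; rule quat_eqI; simp add: quat_defs)
    then show ?case
      using in_M2_qmat_zero by auto
  next
    case (Suc n)
    then obtain X where X: "in_M2 \<O> X" "qmat_pow a b (qmat_add qmat_one E) n =
        qmat_add (qmat_add qmat_one (qmat_scale (of_nat n) E)) (qmat_scale (of_int q) X)"
      by blast
    let ?X = "qmat_add (qmat_add (qmat_scale (of_nat n) Y) X) (qmat_mul a b X E)"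
    have "in_M2 \<O> ?X"
      using in_M2_qmat_add in_M2_qmat_scale[of Y "int n"] in_M2_qmat_mul X(1) Y(1) E by simp
    moreover have "qmat_pow a b (qmat_add qmat_one E) (Suc n) =
        qmat_add (qmat_add qmat_one (qmat_scale (of_nat (Suc n)) E)) (qmat_scale (of_int q) ?X)"
      using qmat_pow_one_plus_step[OF Y(2), of "of_nat n" X] X(2) by (simp add: add.commute)
    ultimately show ?case
      by blast
  qed
  then obtain X where X: "in_M2 \<O> X"
    "qmat_one = qmat_add (qmat_add qmat_one (qmat_scale (of_nat N) E)) (qmat_scale (of_int q) X)"
    using pow by metis
  have "qmat_scale (of_nat N) E = qmat_neg (qmat_scale (of_int q) X)"
    using qmat_add_cancel_left X(2)[symmetric] by blast
  also have "\<dots> = qmat_scale (of_int q) (qmat_neg X)"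
    by (rule qmat_eqI) (simp_all add: qmat_neg_def qmat_scale_def qscale_qneg)
  finally have "in_M2 (multiples q) (qmat_scale (of_int (int N)) E)"
    using in_M2_qmat_neg[OF X(1)] unfolding in_M2_def qmat_scale_def multiples_def by auto
  then show ?thesis
    using E mem_multiples_cancel[OF _ _ cop] unfolding in_M2_def qmat_scale_def by simp
qed

lemma one_plus_torsion_eq_zero:
  assumes q: "\<bar>q\<bar> \<ge> 2" and E: "in_M2 \<O> E" and EE: "in_M2 (multiples q) (qmat_mul a b E E)"
    and pow: "qmat_pow a b (qmat_add qmat_one E) N = qmat_one" and cop: "coprime (int N) q"
  shows "E = qmat_zero"
proof -
  have "in_M2 (multiples (q ^ Suc k)) E" for k
  proof (induction k)
    case 0
    show ?case
      using one_plus_torsion_lift[OF E EE pow cop] by simp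
  next
    case (Suc k)
    have "in_M2 (multiples (q ^ Suc k * q ^ Suc k)) (qmat_mul a b E E)"
      using Suc unfolding in_M2_def qmat_mul_def
      by (simp add: qmul_mem_multiples_mult qadd_mem_multiples)
    moreover have "q ^ Suc (Suc k) dvd q ^ Suc k * q ^ Suc k"
      unfolding power_add[symmetric] by (rule le_imp_power_dvd) simp
    ultimately have "in_M2 (multiples (q ^ Suc (Suc k))) (qmat_mul a b E E)"
      unfolding in_M2_def using multiples_antimono by blast
    then show ?case
      using one_plus_torsion_lift[OF E _ pow] cop by simp
  qed
  then have "in_M2 (multiples (q ^ k)) E" for k
    using E multiples_1 by (cases k) auto
  then show ?thesis
    unfolding in_M2_def qmat_zero_def
    by (intro qmat_eqI) (simp_all add: mem_all_multiples_imp_qzero[OF q])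
qed

end

subsection \<open>Reduction modulo the prime above \<open>p\<close>\<close>

locale order_mod_prime = quat_order +
  fixes P :: "quat set" and p :: nat and red :: "quat \<Rightarrow> 'f::field"
  assumes ideal: "two_sided_ideal a b \<O> P"
    and p_mem_P: "qof_int (int p) \<in> P"
    and prime_p: "prime p"
    and card_gt: "p < CARD('f)"
    and reduction: "reduction_map a b \<O> P red"
begin

lemma P_subset: "P \<subseteq> \<O>"
  and qadd_mem_P: "x \<in> P \<Longrightarrow> y \<in> P \<Longrightarrow> qadd x y \<in> P"
  and qneg_mem_P: "x \<in> P \<Longrightarrow> qneg x \<in> P"
  and qmul_mem_P_left: "x \<in> \<O> \<Longrightarrow> y \<in> P \<Longrightarrow> qmul a b x y \<in> P"
  and qmul_mem_P_right: "x \<in> P \<Longrightarrow> y \<in> \<O> \<Longrightarrow> qmul a b x y \<in> P"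
  using ideal unfolding two_sided_ideal_def by auto

lemma mem_P_imp_mem: "x \<in> P \<Longrightarrow> x \<in> \<O>"
  using P_subset by blast

lemma red_qone: "red qone = 1"
  and red_qadd: "x \<in> \<O> \<Longrightarrow> y \<in> \<O> \<Longrightarrow> red (qadd x y) = red x + red y"
  and red_qmul: "x \<in> \<O> \<Longrightarrow> y \<in> \<O> \<Longrightarrow> red (qmul a b x y) = red x * red y"
  and red_surj: "red ` \<O> = UNIV"
  and red_eq_0_iff: "x \<in> \<O> \<Longrightarrow> red x = 0 \<longleftrightarrow> x \<in> P"
  using reduction unfolding reduction_map_def by auto

lemma red_qzero: "red qzero = 0"
proof -
  have "red qzero + red qzero = red qzero + 0"
    using red_qadd[OF qzero_mem qzero_mem] by (simp add: qadd_zero_right)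
  then show ?thesis
    by (rule add_left_imp_eq)
qed

lemma red_qneg:
  assumes "x \<in> \<O>"
  shows "red (qneg x) = - red x"
proof -
  have "red x + red (qneg x) = 0"
    using red_qadd[OF assms qneg_mem[OF assms]] by (simp add: qadd_qneg_right red_qzero)
  then show ?thesis
    by (simp add: add_eq_0_iff)
qed

lemma red_diff: "x \<in> \<O> \<Longrightarrow> y \<in> \<O> \<Longrightarrow> red (qadd x (qneg y)) = red x - red y"
  using red_qadd[of x "qneg y"] qneg_mem[of y] red_qneg[of y] by simp

lemma red_qof_int: "red (qof_int k) = of_int k"
proof (induction k rule: int_induct[where k = 0])
  case base
  then show ?case
    using red_qzero by (simp add: quat_defs)
next
  case (step1 i)
  have "qof_int (i + 1) = qadd (qof_int i) qone"
    by (simp add: quat_defs)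
  then show ?case
    using step1 red_qadd[OF qof_int_mem qone_mem] red_qone by simp
next
  case (step2 i)
  have "qof_int (i - 1) = qadd (qof_int i) (qneg qone)"
    by (simp add: quat_defs)
  then show ?case
    using step2 red_diff[OF qof_int_mem qone_mem] red_qone by simp
qed

lemma red_qscale: "x \<in> \<O> \<Longrightarrow> red (qscale (of_int k) x) = of_int k * red x"
  using red_qmul[OF qof_int_mem, of x k] red_qof_int[of k]
  by (simp add: qof_int_def qmul_qof_rat_left)

lemma CHAR_eq_p: "CHAR('f) = p"
proof -
  have "red (qof_int (int p)) = 0"
    using red_eq_0_iff[OF qof_int_mem] p_mem_P by blast
  then have "(of_nat p :: 'f) = 0"
    using red_qof_int[of "int p"] by simp
  then have "CHAR('f) dvd p"
    by (simp add: of_nat_eq_0_iff_char_dvd)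
  then have "CHAR('f) = 1 \<or> CHAR('f) = p"
    using prime_p unfolding prime_nat_iff by blast
  then show ?thesis
    by simp
qed

lemma of_int_eq_0_iff: "(of_int k :: 'f) = 0 \<longleftrightarrow> int p dvd k"
  by (simp add: of_int_eq_0_iff_char_dvd CHAR_eq_p)

lemma of_int_mult_inverse:
  assumes "\<not> int p dvd k"
  obtains u where "(of_int u :: 'f) * of_int k = 1"
proof -
  have "coprime (int p) k"
    using prime_p assms by (simp add: prime_imp_coprime)
  then obtain u v where "u * k + v * int p = 1"
    by (metis bezout_int coprime_iff_gcd_eq_1 gcd.commute)
  then have "(of_int (u * k + v * int p) :: 'f) = 1"
    by simp
  then show ?thesis
    using that of_int_eq_0_iff[of "int p"] by simp
qed

lemma mem_range_of_int_cancel: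
  assumes "(of_int k :: 'f) \<noteq> 0" "of_int k * v \<in> range (of_int :: int \<Rightarrow> 'f)"
  shows "v \<in> range (of_int :: int \<Rightarrow> 'f)"
proof -
  obtain u where u: "(of_int u :: 'f) * of_int k = 1"
    using assms(1) of_int_eq_0_iff of_int_mult_inverse by blast
  obtain m where "of_int k * v = (of_int m :: 'f)"
    using assms(2) by auto
  then have "v = of_int (u * m)"
    using u by (metis mult.assoc mult_1 of_int_mult)
  then show ?thesis
    by blast
qed

text \<open>The prime field has only \<open>p < CARD('f)\<close> elements.\<close>

lemma exists_red_notin_range_of_int:
  obtains w where "w \<in> \<O>" "red w \<notin> range (of_int :: int \<Rightarrow> 'f)"
proof -
  have "range (of_int :: int \<Rightarrow> 'f) \<subseteq> of_int ` {0..<int p}"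
  proof
    fix v :: 'f
    assume "v \<in> range of_int"
    then obtain k where "v = of_int k"
      by blast
    moreover have "(of_int k :: 'f) = of_int (k mod int p)"
      using of_int_eq_0_iff[of "k - k mod int p"] by (simp add: mod_eq_dvd_iff[symmetric])
    moreover have "k mod int p \<in> {0..<int p}"
      using prime_gt_0_nat[OF prime_p] by simp
    ultimately show "v \<in> of_int ` {0..<int p}"
      by blast
  qed
  then have "card (range (of_int :: int \<Rightarrow> 'f)) \<le> card (of_int ` {0..<int p} :: 'f set)"
    by (intro card_mono) auto
  also have "\<dots> \<le> card {0..<int p}"
    by (rule card_image_le) simp
  finally have "range (of_int :: int \<Rightarrow> 'f) \<noteq> UNIV"
    using card_gt by auto
  then obtain v :: 'f where v: "v \<notin> range of_int"
    by blast
  have "v \<in> red ` \<O>"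
    using red_surj by simp
  then obtain w where "w \<in> \<O>" "red w = v"
    by blast
  then show ?thesis
    using that v by blast
qed

lemma red_qconj:
  assumes "x \<in> \<O>"
  shows "red (qconj x) = of_int (qtrd_int x) - red x"
  unfolding qconj_eq[OF assms] using red_diff[OF qof_int_mem assms] by (simp add: red_qof_int)

lemma red_mult_red_qconj:
  assumes "x \<in> \<O>"
  shows "red x * red (qconj x) = of_int (qnrd_int a b x)"
proof -
  have "qmul a b x (qconj x) = qof_int (qnrd_int a b x)"
    using qmul_qconj_right qnrd_eq_qnrd_int[OF assms] by (simp add: qof_int_def)
  then show ?thesis
    using red_qmul[OF assms qconj_mem[OF assms]] by (simp add: red_qof_int)
qed

text \<open>Reduce \<open>conj (w y) = conj y conj w\<close> for some \<open>w\<close> with \<open>red w \<notin> \<bbbF>\<^sub>p\<close>: the left side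
  reduces to \<open>trd (w y) \<in> \<bbbF>\<^sub>p\<close>, the right side to \<open>trd y (trd w - red w)\<close>.\<close>

lemma p_dvd_qtrd_int_if_mem_P:
  assumes y: "y \<in> P"
  shows "int p dvd qtrd_int y"
proof -
  have yO: "y \<in> \<O>" and ry: "red y = 0"
    using mem_P_imp_mem[OF y] red_eq_0_iff y by auto
  let ?\<tau> = "(of_int (qtrd_int y) :: 'f)"
  obtain w where w: "w \<in> \<O>" "red w \<notin> range of_int"
    using exists_red_notin_range_of_int by blast
  have wy: "qmul a b w y \<in> P"
    using qmul_mem_P_left[OF w(1) y] .
  have "red (qconj (qmul a b w y)) = of_int (qtrd_int (qmul a b w y))"
    using red_qconj[OF mem_P_imp_mem[OF wy]] red_eq_0_iff[OF mem_P_imp_mem[OF wy]] wy by simp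
  moreover have "red (qconj (qmul a b w y)) = ?\<tau> * (of_int (qtrd_int w) - red w)"
    unfolding qconj_qmul
    using red_qmul[OF qconj_mem[OF yO] qconj_mem[OF w(1)]] red_qconj[OF yO] red_qconj[OF w(1)] ry
    by simp
  ultimately have "?\<tau> * (of_int (qtrd_int w) - red w) \<in> range of_int"
    by (metis rangeI)
  moreover have "of_int (qtrd_int w) - red w \<notin> range (of_int :: int \<Rightarrow> 'f)"
  proof
    assume "of_int (qtrd_int w) - red w \<in> range (of_int :: int \<Rightarrow> 'f)"
    then obtain m where "of_int (qtrd_int w) - red w = (of_int m :: 'f)"
      by blast
    then have "red w = of_int (qtrd_int w - m)"
      by (simp add: algebra_simps)
    then show False
      using w(2) by blast
  qed
  ultimately have "?\<tau> = 0"
    using mem_range_of_int_cancel[of "qtrd_int y" "of_int (qtrd_int w) - red w"] by blast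
  then show ?thesis
    using of_int_eq_0_iff by simp
qed

lemma qconj_mem_P:
  assumes y: "y \<in> P"
  shows "qconj y \<in> P"
proof -
  have yO: "y \<in> \<O>"
    using mem_P_imp_mem[OF y] .
  have "red (qconj y) = 0"
    using red_qconj[OF yO] red_eq_0_iff[OF yO] y p_dvd_qtrd_int_if_mem_P[OF y] of_int_eq_0_iff
    by simp
  then show ?thesis
    using red_eq_0_iff[OF qconj_mem[OF yO]] by simp
qed

lemma qmul_diff_qmul_qconj_mem_multiples:
  assumes y: "y \<in> P" and x: "x \<in> \<O>"
  shows "qadd (qmul a b x y) (qneg (qmul a b y (qconj x))) \<in> multiples (int p)"
proof -
  have xy: "qmul a b x y \<in> P"
    using qmul_mem_P_left[OF x y] .
  obtain u where u: "qtrd_int y = int p * u"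
    using p_dvd_qtrd_int_if_mem_P[OF y] by blast
  obtain v where v: "qtrd_int (qmul a b x y) = int p * v"
    using p_dvd_qtrd_int_if_mem_P[OF xy] by blast
  have "qadd (qmul a b x y) (qneg (qmul a b y (qconj x))) =
      qscale (of_int (int p)) (qadd (qscale (of_int u) x) (qof_int (v - qtrd_int x * u)))"
    unfolding qmul_diff_qmul_qconj qtrd_eq_qtrd_int[OF mem_P_imp_mem[OF y]]
      qtrd_eq_qtrd_int[OF mem_P_imp_mem[OF xy]] qtrd_eq_qtrd_int[OF x] u v
    by (rule quat_eqI) (simp_all add: quat_defs algebra_simps)
  moreover have "qadd (qscale (of_int u) x) (qof_int (v - qtrd_int x * u)) \<in> \<O>"
    using qadd_mem qscale_mem[OF x] qof_int_mem by blast
  ultimately show ?thesis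
    by (metis qscale_mem_multiples)
qed

lemma exists_red_ne_red_qconj:
  obtains w where "w \<in> \<O>" "red w \<noteq> red (qconj w)"
proof -
  obtain w where w: "w \<in> \<O>" "red w \<notin> range of_int"
    using exists_red_notin_range_of_int by blast
  have "red w \<noteq> red (qconj w)"
  proof
    assume eq: "red w = red (qconj w)"
    let ?u = "red w"
    have sum: "?u + ?u = of_int (qtrd_int w)"
      using eq red_qconj[OF w(1)] by (simp add: algebra_simps)
    have prod: "?u * ?u = of_int (qnrd_int a b w)"
      using eq red_mult_red_qconj[OF w(1)] by simp
    show False
    proof (cases "p = 2")
      case True
      let ?n = "qnrd_int a b w"
      have two: "(2::'f) = 0"
        using of_int_eq_0_iff[of 2] True by simp
      have "(?u - of_int ?n) * (?u - of_int ?n) = ?u * ?u - 2 * ?u * of_int ?n + of_int (?n * ?n)"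
        by (simp add: algebra_simps)
      also have "\<dots> = of_int (?n + ?n * ?n)"
        using prod two by simp
      also have "\<dots> = 0"
      proof -
        have "int p dvd ?n + ?n * ?n"
          using True by simp
        then show ?thesis
          by (simp only: of_int_eq_0_iff)
      qed
      finally have "?u = of_int ?n"
        by simp
      then show False
        using w(2) by blast
    next
      case False
      then have "odd p"
        using prime_odd_nat[OF prime_p] prime_ge_2_nat[OF prime_p] by simp
      then have "even (int p + 1)"
        by simp
      then obtain h where h: "int p + 1 = 2 * h" ..
      have "(of_int (2 * h) :: 'f) = of_int (int p) + 1"
        unfolding h[symmetric] by simp
      also have "\<dots> = 1"
        using of_int_eq_0_iff[of "int p"] by simp
      finally have two_h: "(of_int (2 * h) :: 'f) = 1" .
      have "(of_int (h * qtrd_int w) :: 'f) = of_int h * (?u + ?u)"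
        using sum by simp
      also have "\<dots> = of_int (2 * h) * ?u"
        by (simp add: algebra_simps)
      also have "\<dots> = ?u"
        by (simp only: two_h mult_1)
      finally have "(of_int (h * qtrd_int w) :: 'f) = ?u" .
      then show False
        using w(2) by (metis rangeI)
    qed
  qed
  then show ?thesis
    using that w(1) by blast
qed

text \<open>With \<open>d = w - conj w\<close> as above, \<open>y u d\<close> is a sum of three terms of the form
  \<open>x y' - y' conj x\<close> (\<open>y' \<in> P\<close>), so it lies in \<open>p\<O>\<close>; multiplying by \<open>conj d\<close> gives
  \<open>nrd d \<cdot> y u \<in> p\<O>\<close>, and \<open>p \<nmid> nrd d\<close> because \<open>red d \<noteq> 0\<close> and \<open>conj d = -d\<close>.\<close>

lemma qmul_mem_multiples_if_mem_P:
  assumes y: "y \<in> P" and u: "u \<in> P"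
  shows "qmul a b y u \<in> multiples (int p)"
proof -
  obtain w where w: "w \<in> \<O>" "red w \<noteq> red (qconj w)"
    using exists_red_ne_red_qconj by blast
  have yO: "y \<in> \<O>" and uO: "u \<in> \<O>"
    using mem_P_imp_mem y u by auto
  have yu: "qmul a b y u \<in> P"
    using qmul_mem_P_right[OF y uO] .
  let ?d = "qadd w (qneg (qconj w))"
  have dO: "?d \<in> \<O>"
    using qadd_mem qneg_mem qconj_mem w(1) by blast
  have "qmul a b (qmul a b y u) ?d \<in> multiples (int p)"
    unfolding qmul_diff_qconj_expansion
    using qmul_diff_qmul_qconj_mem_multiples[OF yu w(1)]
      qmul_mem_multiples_right[OF qmul_diff_qmul_qconj_mem_multiples[OF y w(1)] uO]
      qmul_mem_multiples_left[OF yO qmul_diff_qmul_qconj_mem_multiples[OF u qconj_mem[OF w(1)]]]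
    by (simp add: qadd_mem_multiples qneg_mem_multiples)
  then have "qmul a b (qmul a b (qmul a b y u) ?d) (qconj ?d) \<in> multiples (int p)"
    using qmul_mem_multiples_right qconj_mem[OF dO] by simp
  moreover have "qmul a b (qmul a b (qmul a b y u) ?d) (qconj ?d) =
      qscale (of_int (qnrd_int a b ?d)) (qmul a b y u)"
    unfolding qmul_assoc qmul_qconj_right qnrd_eq_qnrd_int[OF dO] qmul_qof_rat_right
      qmul_qscale_right ..
  moreover have "coprime (qnrd_int a b ?d) (int p)"
  proof -
    have "red ?d \<noteq> 0"
      using red_diff[OF w(1) qconj_mem[OF w(1)]] w(2) by simp
    moreover have "red (qconj ?d) = - red ?d"
      unfolding qconj_diff_qconj using red_qneg[OF dO] .
    then have "(of_int (qnrd_int a b ?d) :: 'f) = - (red ?d * red ?d)"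
      using red_mult_red_qconj[OF dO] by simp
    ultimately have "(of_int (qnrd_int a b ?d) :: 'f) \<noteq> 0"
      by simp
    then have "\<not> int p dvd qnrd_int a b ?d"
      using of_int_eq_0_iff by simp
    then have "coprime (int p) (qnrd_int a b ?d)"
      using prime_p by (intro prime_imp_coprime) simp_all
    then show ?thesis
      by (simp add: coprime_commute)
  qed
  ultimately show ?thesis
    using mem_multiples_cancel[OF mem_P_imp_mem[OF yu]] by simp
qed

lemma qscale_p_mem_P: "x \<in> \<O> \<Longrightarrow> qscale (of_int (int p)) x \<in> P"
  using qmul_mem_P_right[OF p_mem_P] by (simp add: qof_int_def qmul_qof_rat_left)

lemma red2_nth:
  "red2 red A $ 1 $ 1 = red (m11 A)" "red2 red A $ 1 $ 2 = red (m12 A)"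
  "red2 red A $ 2 $ 1 = red (m21 A)" "red2 red A $ 2 $ 2 = red (m22 A)"
  by (simp_all add: red2_def qm_entry_def)

lemma det_red2: "det (red2 red A) = red (m11 A) * red (m22 A) - red (m12 A) * red (m21 A)"
  unfolding det_2 red2_nth ..

lemma red2_eq_mat_iff:
  "red2 red A = mat c \<longleftrightarrow>
     red (m11 A) = c \<and> red (m12 A) = 0 \<and> red (m21 A) = 0 \<and> red (m22 A) = c"
  unfolding vec_eq_iff forall_2 by (simp add: red2_nth mat_def)

lemma red2_qmat_mul:
  assumes "in_M2 \<O> A" "in_M2 \<O> B"
  shows "red2 red (qmat_mul a b A B) = red2 red A ** red2 red B"
  using assms unfolding vec_eq_iff forall_2 in_M2_def
  by (simp add: matrix_matrix_mult_def sum_2 red2_nth qmat_mul_def red_qadd red_qmul qmul_mem)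

lemma red2_qmat_one: "red2 red qmat_one = mat 1"
  unfolding red2_eq_mat_iff qmat_one_def by (simp add: red_qone red_qzero)

lemma torsion_red2_eq_one:
  assumes D: "in_M2 \<O> D" and red: "red2 red D = mat 1"
    and pow: "qmat_pow a b D N = qmat_one" and cop: "coprime N p"
  shows "D = qmat_one"
proof -
  let ?E = "qmat_add D (qmat_neg qmat_one)"
  have "in_M2 P ?E"
  proof -
    have "m11 D \<in> \<O>" "m12 D \<in> \<O>" "m21 D \<in> \<O>" "m22 D \<in> \<O>"
      using D unfolding in_M2_def by auto
    then show ?thesis
      using red unfolding red2_eq_mat_iff in_M2_def qmat_add_def qmat_neg_def qmat_one_def
      by (simp add: qneg_qzero qadd_zero_right red_eq_0_iff[symmetric] qadd_mem qneg_mem qone_mem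
          red_diff red_qone)
  qed
  then have EE: "in_M2 (multiples (int p)) (qmat_mul a b ?E ?E)"
    unfolding in_M2_def qmat_mul_def
    by (simp add: qmul_mem_multiples_if_mem_P qadd_mem_multiples)
  moreover have "in_M2 \<O> ?E"
    using D qone_mem qzero_mem unfolding in_M2_def by (simp add: qmat_defs qadd_mem qneg_mem)
  moreover have "\<bar>int p\<bar> \<ge> 2"
    using prime_ge_2_nat[OF prime_p] by simp
  moreover have "qmat_pow a b (qmat_add qmat_one ?E) N = qmat_one"
    using pow by (simp only: qmat_add_qmat_one_diff)
  moreover have "coprime (int N) (int p)"
    using cop by simp
  ultimately have "?E = qmat_zero"
    by (intro one_plus_torsion_eq_zero)
  then show ?thesis
    using qmat_add_qmat_one_diff[of D] qmat_add_qmat_zero by simp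
qed

end

subsection \<open>The determinant of the reduction\<close>

text \<open>\<open>r\<close> is the off-diagonal entry of a form in \<open>\<Lambda>\<^sup>n\<^sup>p\<close>, with \<open>r conj r = p M\<close> and \<open>p \<nmid> M\<close>.
  Since \<open>conj r \<in> P\<close> and \<open>P P \<subseteq> p\<O>\<close>, \<open>twist v = conj r v / p\<close> maps \<open>P\<close> into \<open>\<O>\<close>.\<close>

locale twisted_reduction = order_mod_prime a b \<O> e P p red
  for a b \<O> e P p and red :: "quat \<Rightarrow> 'f::field" +
  fixes r :: quat and M :: int
  assumes r_mem_P: "r \<in> P"
    and qmul_r_qconj: "qmul a b r (qconj r) = qof_int (int p * M)"
    and p_not_dvd_M: "\<not> int p dvd M"
begin

definition twist :: "quat \<Rightarrow> quat" where
  "twist v = qscale (1 / of_nat p) (qmul a b (qconj r) v)"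

definition twisted_red :: "quat \<Rightarrow> 'f" where
  "twisted_red v = red (twist v)"

lemma twist_eqI: "qmul a b (qconj r) v = qscale (of_int (int p)) z \<Longrightarrow> twist v = z"
  unfolding twist_def using prime_gt_0_nat[OF prime_p] by (simp add: qscale_qscale qscale_one)

lemma r_mem: "r \<in> \<O>"
  using mem_P_imp_mem[OF r_mem_P] .

lemma qconj_r_mem_P: "qconj r \<in> P"
  using qconj_mem_P[OF r_mem_P] .

lemma twist_mem: "v \<in> P \<Longrightarrow> twist v \<in> \<O>"
  using qmul_mem_multiples_if_mem_P[OF qconj_r_mem_P] twist_eqI unfolding multiples_def by blast

lemma twist_qadd: "twist (qadd v w) = qadd (twist v) (twist w)"
  and twist_qneg: "twist (qneg v) = qneg (twist v)"
  and twist_qmul: "twist (qmul a b v u) = qmul a b (twist v) u"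
  unfolding twist_def
  by (simp_all add: qmul_qadd_right qscale_qadd qmul_qneg_right qscale_qneg qmul_assoc
      qmul_qscale_left)

lemma twisted_red_qadd: "v \<in> P \<Longrightarrow> w \<in> P \<Longrightarrow> twisted_red (qadd v w) = twisted_red v + twisted_red w"
  and twisted_red_qneg: "v \<in> P \<Longrightarrow> twisted_red (qneg v) = - twisted_red v"
  and twisted_red_qmul: "v \<in> P \<Longrightarrow> u \<in> \<O> \<Longrightarrow> twisted_red (qmul a b v u) = twisted_red v * red u"
  unfolding twisted_red_def twist_qadd twist_qneg twist_qmul
  by (simp_all add: twist_mem red_qadd red_qneg red_qmul)

lemma twisted_red_qscale_p:
  assumes "x \<in> \<O>"
  shows "twisted_red (qscale (of_int (int p)) x) = 0"
proof -
  have "twist (qscale (of_int (int p)) x) = qmul a b (qconj r) x"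
    by (rule twist_eqI) (simp add: qmul_qscale_right)
  moreover have "qmul a b (qconj r) x \<in> P"
    using qmul_mem_P_right[OF qconj_r_mem_P assms] .
  ultimately show ?thesis
    unfolding twisted_red_def using red_eq_0_iff[OF mem_P_imp_mem] by simp
qed

lemma qnrd_r: "qnrd a b r = of_int (int p * M)"
proof -
  have "qof_rat (qnrd a b r) = qof_rat (of_int (int p * M))"
    using qmul_r_qconj qmul_qconj_right[of a b r] by (simp add: qof_int_def)
  then show ?thesis
    by (simp add: qof_rat_def)
qed

lemma twisted_red_r: "twisted_red r = of_int M"
proof -
  have "twist r = qof_int M"
    by (rule twist_eqI) (simp add: qmul_qconj_left qnrd_r qof_int_def qof_rat_def qscale_def)
  then show ?thesis
    unfolding twisted_red_def using red_qof_int by simp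
qed

text \<open>By \<open>qconj_sandwich\<close>, \<open>conj r (conj x r) = trd r \<cdot> conj x r - trd (r conj x) \<cdot> r + nrd r \<cdot> x\<close>,
  and the first two terms are \<open>p\<close> times elements of \<open>P\<close>.\<close>

lemma twisted_red_qmul_qconj_r:
  assumes x: "x \<in> \<O>"
  shows "twisted_red (qmul a b (qconj x) r) = of_int M * red x"
proof -
  have xr: "qmul a b (qconj x) r \<in> P"
    using qmul_mem_P_left[OF qconj_mem[OF x] r_mem_P] .
  have rx: "qmul a b r (qconj x) \<in> P"
    using qmul_mem_P_right[OF r_mem_P qconj_mem[OF x]] .
  obtain u1 where u1: "qtrd_int r = int p * u1"
    using p_dvd_qtrd_int_if_mem_P[OF r_mem_P] by blast
  obtain u2 where u2: "qtrd_int (qmul a b r (qconj x)) = int p * u2"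
    using p_dvd_qtrd_int_if_mem_P[OF rx] by blast
  let ?z1 = "qscale (of_int u1) (qmul a b (qconj x) r)" and ?z2 = "qneg (qscale (of_int u2) r)"
  have "twist (qmul a b (qconj x) r) = qadd (qadd ?z1 ?z2) (qscale (of_int M) x)"
  proof (rule twist_eqI)
    show "qmul a b (qconj r) (qmul a b (qconj x) r) =
        qscale (of_int (int p)) (qadd (qadd ?z1 ?z2) (qscale (of_int M) x))"
      unfolding qconj_sandwich qtrd_eq_qtrd_int[OF r_mem] qtrd_eq_qtrd_int[OF mem_P_imp_mem[OF rx]]
        u1 u2 qnrd_r qconj_qconj
      by (rule quat_eqI) (simp_all add: quat_defs algebra_simps)
  qed
  moreover have z1: "?z1 \<in> \<O>" "red ?z1 = 0"
    using qscale_mem red_qscale red_eq_0_iff mem_P_imp_mem[OF xr] xr by simp_all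
  moreover have z2: "?z2 \<in> \<O>" "red ?z2 = 0"
    using qneg_mem[OF qscale_mem[OF r_mem]] red_qneg[OF qscale_mem[OF r_mem]] red_qscale[OF r_mem]
      red_eq_0_iff[OF r_mem] r_mem_P
    by simp_all
  ultimately show ?thesis
    unfolding twisted_red_def
    using red_qadd[OF qadd_mem[OF z1(1) z2(1)] qscale_mem[OF x]] red_qadd[OF z1(1) z2(1)]
      red_qscale[OF x]
    by simp
qed

lemma twisted_red_qmul_qconj_qconj_r:
  assumes z: "z \<in> \<O>"
  shows "twisted_red (qmul a b (qconj z) (qconj r)) = - (of_int M * red z)"
proof -
  have zc: "qconj z \<in> \<O>"
    using qconj_mem[OF z] .
  obtain u where u: "qtrd_int r = int p * u"
    using p_dvd_qtrd_int_if_mem_P[OF r_mem_P] by blast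
  have "qmul a b (qconj z) (qconj r) =
      qadd (qscale (of_int (int p)) (qscale (of_int u) (qconj z))) (qneg (qmul a b (qconj z) r))"
    unfolding qconj_eq[OF r_mem] u qmul_qadd_right qmul_qneg_right qof_int_def qmul_qof_rat_right
      qscale_qscale
    by simp
  moreover have "qscale (of_int (int p)) (qscale (of_int u) (qconj z)) \<in> P"
    using qscale_p_mem_P qscale_mem zc by blast
  moreover have "qmul a b (qconj z) r \<in> P"
    using qmul_mem_P_left[OF zc r_mem_P] .
  ultimately show ?thesis
    using twisted_red_qadd qneg_mem_P twisted_red_qneg twisted_red_qscale_p[OF qscale_mem[OF zc]]
      twisted_red_qmul_qconj_r[OF z]
    by simp
qed

lemma qmul_qof_int_p_mult:
  "qmul a b x (qof_int (int p * s)) = qscale (of_int (int p)) (qscale (of_int s) x)"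
  by (simp add: qof_int_def qmul_qof_rat_right qscale_qscale)

text \<open>Apply \<^const>\<open>twisted_red\<close> to the \<open>(1,2)\<close> entry of \<open>\<alpha>\<^sup>\<dagger> H \<alpha> = H\<close>: it gives
  \<open>M (red x red w - red y red z) = M\<close>.\<close>

lemma red_det_eq_1_if_entry:
  assumes x: "x \<in> \<O>" and y: "y \<in> \<O>" and z: "z \<in> \<O>" and w: "w \<in> \<O>"
    and entry: "qadd (qmul a b (qadd (qmul a b (qconj x) (qof_int (int p * s)))
                                     (qmul a b (qconj z) (qconj r))) y)
                     (qmul a b (qadd (qmul a b (qconj x) r)
                                     (qmul a b (qconj z) (qof_int (int p * t)))) w) = r"
  shows "red x * red w - red y * red z = 1"
proof -
  have xc: "qconj x \<in> \<O>" and zc: "qconj z \<in> \<O>"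
    using qconj_mem x z by auto
  let ?u1 = "qscale (of_int (int p)) (qscale (of_int s) (qconj x))"
  let ?u2 = "qmul a b (qconj z) (qconj r)"
  let ?v1 = "qmul a b (qconj x) r"
  let ?v2 = "qscale (of_int (int p)) (qscale (of_int t) (qconj z))"
  have mem: "?u1 \<in> P" "?u2 \<in> P" "?v1 \<in> P" "?v2 \<in> P"
    using qscale_p_mem_P qscale_mem xc zc qmul_mem_P_left qconj_r_mem_P r_mem_P by auto
  have "of_int M = twisted_red r"
    using twisted_red_r ..
  also have "\<dots> = twisted_red (qadd (qmul a b (qadd ?u1 ?u2) y) (qmul a b (qadd ?v1 ?v2) w))"
    using entry unfolding qmul_qof_int_p_mult by simp
  also have "\<dots> = (twisted_red ?u1 + twisted_red ?u2) * red y + (twisted_red ?v1 + twisted_red ?v2) * red w"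
    using mem y w by (simp add: twisted_red_qadd twisted_red_qmul qadd_mem_P qmul_mem_P_right)
  also have "\<dots> = - (of_int M * red z) * red y + of_int M * red x * red w"
    using twisted_red_qscale_p[OF qscale_mem[OF xc]] twisted_red_qscale_p[OF qscale_mem[OF zc]]
      twisted_red_qmul_qconj_qconj_r[OF z] twisted_red_qmul_qconj_r[OF x]
    by simp
  finally have "of_int M * (red x * red w - red y * red z) = of_int M * 1"
    by (simp add: algebra_simps)
  moreover have "(of_int M :: 'f) \<noteq> 0"
    using p_not_dvd_M of_int_eq_0_iff by simp
  ultimately show ?thesis
    by simp
qed

lemma det_red2_eq_1:
  assumes H: "H = QMat (qof_int (int p * s)) r (qconj r) (qof_int (int p * t))"
    and \<alpha>: "\<alpha> \<in> Aut a b \<O> H"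
  shows "det (red2 red \<alpha>) = 1"
proof -
  obtain x y z w where xyzw: "\<alpha> = QMat x y z w"
    by (cases \<alpha>)
  have "m12 (qmat_mul a b (qmat_mul a b (qmat_dagger \<alpha>) H) \<alpha>) = r"
    using \<alpha> H unfolding Aut_def by simp
  then have "qadd (qmul a b (qadd (qmul a b (qconj x) (qof_int (int p * s)))
                                 (qmul a b (qconj z) (qconj r))) y)
                 (qmul a b (qadd (qmul a b (qconj x) r)
                                 (qmul a b (qconj z) (qof_int (int p * t)))) w) = r"
    unfolding xyzw H by (simp add: qmat_mul_def qmat_dagger_def)
  moreover have "x \<in> \<O>" "y \<in> \<O>" "z \<in> \<O>" "w \<in> \<O>"
    using \<alpha> unfolding xyzw Aut_def GL2_def in_M2_def by auto
  ultimately show ?thesis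
    unfolding det_red2 xyzw using red_det_eq_1_if_entry by simp
qed

end

subsection \<open>Finite subgroups of \<open>GL\<^sub>2(\<O>)\<close>\<close>

lemma qmat_subgroup_mono: "qmat_subgroup a b \<Gamma> G \<Longrightarrow> G \<subseteq> G' \<Longrightarrow> qmat_subgroup a b \<Gamma> G'"
  unfolding qmat_subgroup_def by blast

lemma qmat_pow_card_eq_qmat_one:
  assumes \<Gamma>: "qmat_subgroup a b \<Gamma> G" and fin: "finite \<Gamma>" and \<gamma>: "\<gamma> \<in> \<Gamma>"
  shows "qmat_pow a b \<gamma> (card \<Gamma>) = qmat_one"
proof -
  define H where "H = \<lparr>carrier = \<Gamma>, monoid.mult = qmat_mul a b, one = qmat_one\<rparr>"
  have "group H"
    using \<Gamma> unfolding qmat_subgroup_def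
    by (intro groupI) (auto simp: H_def qmat_mul_assoc qmat_mul_qmat_one_left)
  moreover have "\<gamma> [^]\<^bsub>H\<^esub> n = qmat_pow a b \<gamma> n" for n
    by (induction n) (simp_all add: H_def)
  ultimately show ?thesis
    using group.pow_order_eq_1[of H \<gamma>] \<gamma> fin by (simp add: H_def order_def)
qed

lemma GL2_subgroup_mem_M2: "qmat_subgroup a b \<Gamma> (GL2 a b \<O>) \<Longrightarrow> \<gamma> \<in> \<Gamma> \<Longrightarrow> in_M2 \<O> \<gamma>"
  unfolding qmat_subgroup_def GL2_def by blast

lemma matrix_mul_mat_left_commute_2:
  fixes A B :: "'a::comm_ring_1^2^2"
  shows "A ** (mat c ** B) = mat c ** (A ** B)"
  unfolding vec_eq_iff forall_2 by (simp add: matrix_matrix_mult_def mat_def sum_2 algebra_simps)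

context order_mod_prime
begin

lemma torsion_red2_scalar:
  assumes \<gamma>: "in_M2 \<O> \<gamma>" and red: "red2 red \<gamma> = mat c" and det: "det (red2 red \<gamma>) = 1"
    and pow: "qmat_pow a b \<gamma> N = qmat_one" and cop: "coprime N p"
  shows "\<gamma> = qmat_one \<or> \<gamma> = qmat_neg qmat_one"
proof (cases "c = 1")
  case True
  then show ?thesis
    using torsion_red2_eq_one[OF \<gamma> _ pow cop] red by simp
next
  case False
  have "c * c = 1"
    using det red unfolding det_red2 red2_eq_mat_iff by simp
  then have c: "c = - 1"
    using False by (simp add: square_eq_1_iff)
  then have "CHAR('f) \<noteq> 2"
    using False c uminus_CHAR_2[of "1 :: 'f"] by auto
  then have "odd p"
    using CHAR_eq_p prime_odd_nat[OF prime_p] prime_ge_2_nat[OF prime_p] by simp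
  have "in_M2 \<O> (qmat_neg \<gamma>)"
    using \<gamma> in_M2_qmat_neg by blast
  moreover have "red2 red (qmat_neg \<gamma>) = mat 1"
    using red c \<gamma> unfolding red2_eq_mat_iff in_M2_def qmat_neg_def by (simp add: red_qneg)
  moreover have "qmat_pow a b (qmat_neg \<gamma>) (N * 2) = qmat_one"
    using qmat_pow_qmat_neg_even[of "N * 2"] by (simp add: qmat_pow_mult pow qmat_pow_qmat_one)
  moreover have "coprime (N * 2) p"
    using cop \<open>odd p\<close> by simp
  ultimately have "qmat_neg \<gamma> = qmat_one"
    by (rule torsion_red2_eq_one)
  then show ?thesis
    using qmat_neg_qmat_neg by metis
qed

lemma GL2_subgroup_quotient:
  assumes \<Gamma>: "qmat_subgroup a b \<Gamma> (GL2 a b \<O>)" and \<alpha>: "\<alpha> \<in> \<Gamma>" and \<beta>: "\<beta> \<in> \<Gamma>"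
    and red: "red2 red \<alpha> = mat c ** red2 red \<beta>"
  obtains \<gamma> where "\<gamma> \<in> \<Gamma>" "\<alpha> = qmat_mul a b \<beta> \<gamma>" "red2 red \<gamma> = mat c"
proof -
  note M2 = GL2_subgroup_mem_M2[OF \<Gamma>]
  obtain \<beta>' where \<beta>': "\<beta>' \<in> \<Gamma>" "qmat_mul a b \<beta> \<beta>' = qmat_one" "qmat_mul a b \<beta>' \<beta> = qmat_one"
    using \<Gamma> \<beta> unfolding qmat_subgroup_def by blast
  let ?\<gamma> = "qmat_mul a b \<beta>' \<alpha>"
  have "?\<gamma> \<in> \<Gamma>"
    using \<Gamma> \<beta>'(1) \<alpha> unfolding qmat_subgroup_def by blast
  moreover have "\<alpha> = qmat_mul a b \<beta> ?\<gamma>"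
    using \<beta>'(2) by (simp add: qmat_mul_assoc[symmetric] qmat_mul_qmat_one_left)
  moreover have "red2 red ?\<gamma> = mat c"
  proof -
    have "red2 red ?\<gamma> = red2 red \<beta>' ** (mat c ** red2 red \<beta>)"
      using red2_qmat_mul M2 \<beta>'(1) \<alpha> red by simp
    also have "\<dots> = mat c ** red2 red (qmat_mul a b \<beta>' \<beta>)"
      using red2_qmat_mul M2 \<beta>'(1) \<beta> by (simp add: matrix_mul_mat_left_commute_2)
    finally show ?thesis
      using \<beta>'(3) red2_qmat_one by simp
  qed
  ultimately show ?thesis
    using that by blast
qed

lemma finite_if_coprime_card:
  assumes "coprime (card A) p"
  shows "finite A"
proof (rule ccontr)
  assume "infinite A"
  then have "p = 1"
    using assms by simp
  then show False
    using prime_p by simp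
qed

lemma GL2_subgroup_red2_inj:
  assumes \<Gamma>: "qmat_subgroup a b \<Gamma> (GL2 a b \<O>)" and cop: "coprime (card \<Gamma>) p"
  shows "inj_on (red2 red) \<Gamma>"
proof (rule inj_onI)
  fix \<alpha> \<beta>
  assume "\<alpha> \<in> \<Gamma>" "\<beta> \<in> \<Gamma>" "red2 red \<alpha> = red2 red \<beta>"
  then obtain \<gamma> where \<gamma>: "\<gamma> \<in> \<Gamma>" "\<alpha> = qmat_mul a b \<beta> \<gamma>" "red2 red \<gamma> = mat 1"
    using GL2_subgroup_quotient[OF \<Gamma>, of \<alpha> \<beta> 1] by auto
  have "\<gamma> = qmat_one"
    using GL2_subgroup_mem_M2[OF \<Gamma> \<gamma>(1)] \<gamma>(3)
      qmat_pow_card_eq_qmat_one[OF \<Gamma> finite_if_coprime_card[OF cop] \<gamma>(1)] cop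
    by (rule torsion_red2_eq_one)
  then show "\<alpha> = \<beta>"
    using \<gamma>(2) by (simp add: qmat_mul_qmat_one_right)
qed

lemma GL2_subgroup_red2_scalar:
  assumes \<Gamma>: "qmat_subgroup a b \<Gamma> (GL2 a b \<O>)" and cop: "coprime (card \<Gamma>) p"
    and det: "\<forall>\<gamma>\<in>\<Gamma>. det (red2 red \<gamma>) = 1"
    and \<alpha>: "\<alpha> \<in> \<Gamma>" and \<beta>: "\<beta> \<in> \<Gamma>" and red: "red2 red \<alpha> = mat c ** red2 red \<beta>"
  shows "\<alpha> = \<beta> \<or> \<alpha> = qmat_neg \<beta>"
proof -
  obtain \<gamma> where \<gamma>: "\<gamma> \<in> \<Gamma>" "\<alpha> = qmat_mul a b \<beta> \<gamma>" "red2 red \<gamma> = mat c"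
    using GL2_subgroup_quotient[OF \<Gamma> \<alpha> \<beta> red] by blast
  have "\<gamma> = qmat_one \<or> \<gamma> = qmat_neg qmat_one"
    using GL2_subgroup_mem_M2[OF \<Gamma> \<gamma>(1)] \<gamma>(3) det[rule_format, OF \<gamma>(1)]
      qmat_pow_card_eq_qmat_one[OF \<Gamma> finite_if_coprime_card[OF cop] \<gamma>(1)] cop
    by (rule torsion_red2_scalar)
  then show ?thesis
    using \<gamma>(2) by (auto simp: qmat_mul_qmat_one_right qmat_mul_qmat_neg_right)
qed

end

lemma Lambda_np_memE:
  assumes "H \<in> Lambda_np a b p P" "prime p"
  obtains s t r M where "H = QMat (qof_int (int p * s)) r (qconj r) (qof_int (int p * t))"
    "r \<in> P" "qmul a b r (qconj r) = qof_int (int p * M)" "\<not> int p dvd M"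
proof -
  obtain s t r where H: "H = QMat (qof_int (int p * s)) r (qconj r) (qof_int (int p * t))"
    and r: "r \<in> P" "qmul a b r (qconj r) = qof_int (int p ^ 2 * s * t - int p)"
    using assms(1) unfolding Lambda_np_def by blast
  have "qmul a b r (qconj r) = qof_int (int p * (int p * s * t - 1))"
    using r(2) by (simp add: algebra_simps power2_eq_square)
  moreover have "\<not> int p dvd int p * s * t - 1"
  proof
    assume p_dvd: "int p dvd int p * s * t - 1"
    have "int p dvd int p * s * t"
      by (simp add: mult.assoc)
    then have "int p dvd int p * s * t - (int p * s * t - 1)"
      using p_dvd by (rule dvd_diff)
    then have "int p dvd 1"
      by simp
    then show False
      using assms(2) by simp
  qed
  ultimately show ?thesis
    using that H r(1) by blast
qed

theorem proposition10p5:
  fixes a b :: rat and p :: nat and \<O> P :: "quat set" and red :: "quat \<Rightarrow> 'f::field"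
    and H :: qmat and \<Gamma> :: "qmat set"
  assumes "prime p"
    and "definite_quat a b"
    and "quat_disc_is a b p"
    and "maximal_order a b \<O>"
    and "two_sided_prime_above a b \<O> p P"
    and "CARD('f) = p ^ 2"
    and "reduction_map a b \<O> P red"
    and "H \<in> Lambda_np a b p P"
    and "qmat_subgroup a b \<Gamma> (Aut a b \<O> H)"
    and "coprime (card \<Gamma>) p"
  shows "(\<forall>\<alpha>\<in>\<Gamma>. det (red2 red \<alpha>) = 1)
       \<and> (\<forall>\<alpha>\<in>\<Gamma>. \<forall>\<beta>\<in>\<Gamma>. red2 red (qmat_mul a b \<alpha> \<beta>) = red2 red \<alpha> ** red2 red \<beta>)
       \<and> inj_on (red2 red) \<Gamma>
       \<and> (\<forall>\<alpha>\<in>\<Gamma>. \<forall>\<beta>\<in>\<Gamma>. (\<exists>c. c \<noteq> 0 \<and> red2 red \<alpha> = mat c ** red2 red \<beta>)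
              \<longrightarrow> \<alpha> = \<beta> \<or> \<alpha> = qmat_neg \<beta>)"
proof -
  have order: "is_order a b \<O>"
    using assms(4) unfolding maximal_order_def by blast
  then obtain e where "lattice_basis \<O> e"
    unfolding is_order_def by blast
  moreover obtain s t r M where H: "H = QMat (qof_int (int p * s)) r (qconj r) (qof_int (int p * t))"
    and "r \<in> P" "qmul a b r (qconj r) = qof_int (int p * M)" "\<not> int p dvd M"
    by (rule Lambda_np_memE[OF assms(8,1)])
  moreover have "p < CARD('f)"
    using assms(6) power_strict_increasing_iff[of p 1 2] prime_gt_1_nat[OF assms(1)] by simp
  ultimately interpret twisted_reduction a b \<O> e P p red r M
    using order assms(1,5,7) unfolding is_order_def two_sided_prime_above_def
    by unfold_locales blast+
  have \<Gamma>: "qmat_subgroup a b \<Gamma> (GL2 a b \<O>)"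
    using assms(9) by (rule qmat_subgroup_mono) (auto simp: Aut_def)
  have det: "\<forall>\<alpha>\<in>\<Gamma>. det (red2 red \<alpha>) = 1"
  proof
    fix \<alpha>
    assume "\<alpha> \<in> \<Gamma>"
    then have "\<alpha> \<in> Aut a b \<O> H"
      using assms(9) unfolding qmat_subgroup_def by blast
    then show "det (red2 red \<alpha>) = 1"
      by (rule det_red2_eq_1[OF H])
  qed
  moreover have "\<forall>\<alpha>\<in>\<Gamma>. \<forall>\<beta>\<in>\<Gamma>. red2 red (qmat_mul a b \<alpha> \<beta>) = red2 red \<alpha> ** red2 red \<beta>"
    using red2_qmat_mul GL2_subgroup_mem_M2[OF \<Gamma>] by blast
  moreover have "\<forall>\<alpha>\<in>\<Gamma>. \<forall>\<beta>\<in>\<Gamma>. (\<exists>c. c \<noteq> 0 \<and> red2 red \<alpha> = mat c ** red2 red \<beta>)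
      \<longrightarrow> \<alpha> = \<beta> \<or> \<alpha> = qmat_neg \<beta>"
    using GL2_subgroup_red2_scalar[OF \<Gamma> assms(10) det] by blast
  ultimately show ?thesis
    using GL2_subgroup_red2_inj[OF \<Gamma> assms(10)] by blast
qed

end
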